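(* Let $f:\mathbb{R}^n\to\mathbb{R}\cup\{\infty\}$ be finite and Lipschitz continuous near $\bar x$ and subdifferentially regular at $\bar x$, i.e. $\hat\partial f(\bar x)=\partial f(\bar x)$. Then $\operatorname{calm}f(\bar x)=\operatorname{lip}f(\bar x)$.
   Context: $\operatorname{calm}f(\bar x):=\limsup_{x\to\bar x,\,x\ne\bar x}\frac{|f(x)-f(\bar x)|}{|x-\bar x|}$ and $\operatorname{lip}f(\bar x):=\limsup_{x,x'\to\bar x,\,x\ne x'}\frac{|f(x)-f(x')|}{|x-x'|}$. A vector $v$ is a regular subgradient, $v\in\hat\partial f(\bar x)$, if $f(x)\ge f(\bar x)+\langle v,x-\bar x\rangle+o(|x-\bar x|)$; $v$ is a (general) subgradient, $v\in\partial f(\bar x)$, if there are $x^\nu\to\bar x$ and $v^\nu\in\hat\partial f(x^\nu)$ with $v^\nu\to v$ and $f(x^\nu)\to f(\bar x)$. *)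

theory Defs
  imports "HOL-Analysis.Analysis" "HOL-Library.Extended_Real"
begin

definition calm :: "('a::euclidean_space \<Rightarrow> ereal) \<Rightarrow> 'a \<Rightarrow> ereal" where
  "calm f xb = Limsup (at xb) (\<lambda>x. \<bar>f x - f xb\<bar> / ereal (norm (x - xb)))"

definition lip :: "('a::euclidean_space \<Rightarrow> ereal) \<Rightarrow> 'a \<Rightarrow> ereal" where
  "lip f xb = Limsup (at (xb, xb) within {p. fst p \<noteq> snd p})
      (\<lambda>p. \<bar>f (fst p) - f (snd p)\<bar> / ereal (norm (fst p - snd p)))"

definition regular_subgrad :: "('a::euclidean_space \<Rightarrow> ereal) \<Rightarrow> 'a \<Rightarrow> 'a set" where
  "regular_subgrad f xb = {v. \<bar>f xb\<bar> \<noteq> \<infinity> \<and>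
     (\<forall>e>0. \<forall>\<^sub>F x in at xb. f x \<ge> f xb + ereal (v \<bullet> (x - xb) - e * norm (x - xb)))}"

definition general_subgrad :: "('a::euclidean_space \<Rightarrow> ereal) \<Rightarrow> 'a \<Rightarrow> 'a set" where
  "general_subgrad f xb = {v. \<exists>xs vs. xs \<longlonglongrightarrow> xb \<and> vs \<longlonglongrightarrow> v \<and>
     (\<forall>k. vs k \<in> regular_subgrad f (xs k)) \<and> (\<lambda>k. f (xs k)) \<longlonglongrightarrow> f xb}"

definition lipschitz_near :: "('a::euclidean_space \<Rightarrow> ereal) \<Rightarrow> 'a \<Rightarrow> bool" where
  "lipschitz_near f xb \<longleftrightarrow> (\<exists>d>0. \<exists>L. (\<forall>x\<in>ball xb d. \<bar>f x\<bar> \<noteq> \<infinity>) \<and>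
      (\<forall>x\<in>ball xb d. \<forall>y\<in>ball xb d. \<bar>real_of_ereal (f x) - real_of_ereal (f y)\<bar> \<le> L * dist x y))"

end

theory Submission
  imports Defs
begin

(* The inequality calm f xb <= lip f xb holds for every f, since the calmness quotient is the
   Lipschitz quotient restricted to pairs (x, xb).  For the converse take c < lip f xb.
   Then there are pairs x, x' arbitrarily close to xb whose difference quotient exceeds c.
   A variational argument (the locale steep_pair) minimizes g plus a linear tilt and quadratic
   penalties over a cylinder around the segment [x', x]; the minimizer z is interior, so the
   penalty gradient is a proximal, hence regular, subgradient of f at z, of norm at least
   c - epsilon and bounded uniformly in terms of the Lipschitz constant.  Letting the pairs
   converge to xb and extracting a convergent subsequence of these subgradients produces a
   general subgradient of norm at least c.  By regularity it is a regular subgradient at xb,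
   and every regular subgradient v gives norm v <= calm f xb, by moving from xb along v.
   Thus lip f xb <= calm f xb. *)

definition orth_comp :: "'a::real_inner \<Rightarrow> 'a \<Rightarrow> 'a" where
  "orth_comp u w = w - (u \<bullet> w) *\<^sub>R u"

lemma orth_comp_diff: "orth_comp u (a - b) = orth_comp u a - orth_comp u b"
  by (simp add: orth_comp_def inner_diff_right algebra_simps)

lemma inner_orth_comp:
  assumes "norm u = 1"
  shows "u \<bullet> orth_comp u w = 0"
  using assms by (simp add: orth_comp_def inner_diff_right norm_eq_1)

lemma orth_comp_add_scaled:
  assumes "norm u = 1"
  shows "orth_comp u (w + c *\<^sub>R u) = orth_comp u w"
  using assms by (simp add: orth_comp_def inner_add_right norm_eq_1 algebra_simps)

lemma norm_orth_comp_le: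
  assumes "norm u = 1"
  shows "norm (orth_comp u w) \<le> norm w"
proof -
  have "orth_comp u w \<bullet> orth_comp u w = w \<bullet> w - (u \<bullet> w)\<^sup>2"
    using assms by (simp add: orth_comp_def inner_diff_left inner_diff_right norm_eq_1
        inner_commute power2_eq_square algebra_simps)
  thus ?thesis by (simp add: norm_le)
qed

text \<open>Constants of the construction, depending only on the Lipschitz constant L and the
  tolerance epsilon: the cylinder built around a steep pair x, x' stays within
  reach_factor L epsilon * dist x x' of x', and the subgradients it yields have norm at most
  subgrad_bound L epsilon.\<close>
definition reach_factor :: "real \<Rightarrow> real \<Rightarrow> real" where
  "reach_factor L \<epsilon> = 8 * (L + \<epsilon>) / \<epsilon> + 1 + \<epsilon> / (4 * L)"

definition subgrad_bound :: "real \<Rightarrow> real \<Rightarrow> real" where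
  "subgrad_bound L \<epsilon> = 7 * L + 6 * \<epsilon> + 2"

text \<open>In this setting we produce a proximal subgradient of g whose
  slope in the direction from x' to x is at least the difference quotient minus epsilon.\<close>
locale steep_pair =
  fixes g :: "'a::euclidean_space \<Rightarrow> real" and S :: "'a set" and L \<epsilon> :: real and x x' :: 'a
  assumes L_ge_1: "L \<ge> 1" and eps_pos: "\<epsilon> > 0"
    and lipschitz: "L-lipschitz_on S g"
    and distinct: "x \<noteq> x'"
    and room_in_S: "cball x' (reach_factor L \<epsilon> * dist x x') \<subseteq> S"
begin

text \<open>The function
  penalised tilts g by (slope - epsilon) along dir and adds a weak quadratic penalty pulling
  towards the face through x and a strong one pulling towards the axis; region is the closed
  cylinder of radius width around the axis, from back_len behind x' up to x.\<close>
definition "rho = dist x x'"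
definition "dir = (1 / rho) *\<^sub>R (x - x')"
definition "slope = (g x - g x') / rho"
definition "front_weight = \<epsilon> / (4 * rho)"
definition "back_len = 8 * rho * (L + \<epsilon>) / \<epsilon>"
definition "width = \<epsilon> * rho / (4 * L)"
definition "side_weight = (L + 1) / width"
definition "along y = dir \<bullet> (y - x')" for y
definition "across y = orth_comp dir (y - x')" for y
definition "penalised y = g y - (slope - \<epsilon>) * along y + front_weight * (along y - rho)\<^sup>2
    + side_weight * (norm (across y))\<^sup>2" for y
definition "region = {y. - back_len \<le> along y \<and> along y \<le> rho \<and> norm (across y) \<le> width}"

lemma rho_pos: "rho > 0"
  using distinct by (simp add: rho_def)

lemma dir_unit: "norm dir = 1"
  using rho_pos by (simp add: dir_def rho_def dist_norm)

lemma x_minus_x': "x - x' = rho *\<^sub>R dir"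
  using rho_pos by (simp add: dir_def)

lemma weights_pos: "front_weight > 0" "back_len > 0" "width > 0" "side_weight > 0"
  using rho_pos eps_pos L_ge_1
  by (auto simp: front_weight_def back_len_def width_def side_weight_def)

lemma decomp: "y - x' = along y *\<^sub>R dir + across y"
  by (simp add: along_def across_def orth_comp_def)

lemma coords_x: "along x = rho" "across x = 0"
  using x_minus_x' dir_unit by (simp_all add: along_def across_def orth_comp_def norm_eq_1)

lemma coords_x': "along x' = 0" "across x' = 0"
  by (simp_all add: along_def across_def orth_comp_def)

lemma along_diff: "along y - along z = dir \<bullet> (y - z)"
  by (simp add: along_def inner_diff_right)

lemma across_diff: "across y - across z = orth_comp dir (y - z)"
  by (simp add: across_def orth_comp_diff[symmetric])

lemma coords_shift: "along (y + c *\<^sub>R dir) = along y + c" "across (y + c *\<^sub>R dir) = across y"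
  using dir_unit orth_comp_add_scaled[OF dir_unit, of "y - x'" c]
  by (simp_all add: along_def across_def inner_add_right norm_eq_1 algebra_simps)

lemma region_subset_cball: "region \<subseteq> cball x' (reach_factor L \<epsilon> * dist x x')"
proof
  fix y assume "y \<in> region"
  hence "- back_len \<le> along y" "along y \<le> rho" and width: "norm (across y) \<le> width"
    by (simp_all add: region_def)
  hence "\<bar>along y\<bar> \<le> back_len + rho" using weights_pos rho_pos by linarith
  moreover have "norm (y - x') \<le> \<bar>along y\<bar> + norm (across y)"
    using norm_triangle_ineq[of "along y *\<^sub>R dir" "across y"] dir_unit
    by (simp add: decomp[of y])
  moreover have "reach_factor L \<epsilon> * dist x x' = back_len + rho + width"
    using rho_pos eps_pos L_ge_1
    by (simp add: reach_factor_def back_len_def width_def rho_def field_simps)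
  ultimately show "y \<in> cball x' (reach_factor L \<epsilon> * dist x x')"
    using width by (auto simp: dist_norm norm_minus_commute)
qed

lemma region_subset_S: "region \<subseteq> S"
  using region_subset_cball room_in_S by blast

lemma x_in_region: "x \<in> region" and x'_in_region: "x' \<in> region"
  using coords_x coords_x' weights_pos rho_pos by (auto simp: region_def)

lemma lipschitz_region: "a \<in> region \<Longrightarrow> b \<in> region \<Longrightarrow> \<bar>g a - g b\<bar> \<le> L * norm (a - b)"
  using lipschitz region_subset_S by (auto simp: lipschitz_on_def dist_norm dist_real_def)

lemma slope_bound: "\<bar>slope\<bar> \<le> L"
proof -
  have "\<bar>g x - g x'\<bar> \<le> L * rho"
    using lipschitz_region[OF x_in_region x'_in_region] by (simp add: rho_def dist_norm)
  thus ?thesis using rho_pos by (simp add: slope_def abs_divide divide_le_eq)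
qed

lemma compact_region: "compact region"
proof -
  have "continuous_on UNIV along" "continuous_on UNIV across"
    unfolding along_def across_def orth_comp_def by (intro continuous_intros)+
  hence "closed region"
    unfolding region_def by (intro closed_Collect_conj closed_Collect_le continuous_intros) auto
  thus ?thesis
    using region_subset_cball by (meson bounded_cball bounded_subset compact_eq_bounded_closed)
qed

lemma continuous_penalised: "continuous_on region penalised"
proof -
  have "continuous_on region g"
    using lipschitz_on_continuous_on lipschitz lipschitz_on_subset region_subset_S by blast
  thus ?thesis
    unfolding penalised_def along_def across_def orth_comp_def by (intro continuous_intros)
qed

definition "minimizer = (SOME z. z \<in> region \<and> (\<forall>y\<in>region. penalised z \<le> penalised y))"

lemma minimizer: "minimizer \<in> region" "\<And>y. y \<in> region \<Longrightarrow> penalised minimizer \<le> penalised y"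
proof -
  have "\<exists>z. z \<in> region \<and> (\<forall>y\<in>region. penalised z \<le> penalised y)"
    using continuous_attains_inf[OF compact_region _ continuous_penalised] x_in_region by blast
  from someI_ex[OF this] show "minimizer \<in> region" "\<And>y. y \<in> region \<Longrightarrow> penalised minimizer \<le> penalised y"
    unfolding minimizer_def by blast+
qed

text \<open>The side penalty is steep enough that the minimizer stays off the lateral boundary:
  projecting onto the axis lowers the penalty by more than g can rise.\<close>
lemma minimizer_off_side: "norm (across minimizer) < width"
proof (rule ccontr)
  let ?z = minimizer
  assume "\<not> norm (across ?z) < width"
  hence wide: "width \<le> norm (across ?z)" by simp
  define p where "p = x' + along ?z *\<^sub>R dir"
  have p_coords: "along p = along ?z" "across p = 0"
    using coords_shift[of x' "along ?z"] coords_x' by (simp_all add: p_def)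
  have p_in: "p \<in> region"
    using minimizer(1) p_coords weights_pos by (simp add: region_def)
  have "?z - p = across ?z" using decomp[of ?z] by (simp add: p_def algebra_simps)
  hence "\<bar>g ?z - g p\<bar> \<le> L * norm (across ?z)"
    using lipschitz_region[OF minimizer(1) p_in] by simp
  moreover have "L < side_weight * norm (across ?z)"
  proof -
    have "side_weight * width = L + 1" using weights_pos by (simp add: side_weight_def)
    thus ?thesis using wide weights_pos mult_left_mono[OF wide, of side_weight] by linarith
  qed
  hence "L * norm (across ?z) < (side_weight * norm (across ?z)) * norm (across ?z)"
    using wide weights_pos by (intro mult_strict_right_mono) auto
  hence "L * norm (across ?z) < side_weight * (norm (across ?z))\<^sup>2"
    by (simp add: power2_eq_square mult.assoc)
  ultimately have "penalised p < penalised ?z"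
    by (simp add: penalised_def p_coords)
  with minimizer(2)[OF p_in] show False by simp
qed

text \<open>The front penalty prevents the minimizer from sitting on the face through x:
  sliding back to the face through x' would lower the penalty by about epsilon * rho / 4.\<close>
lemma minimizer_off_front: "along minimizer < rho"
proof (rule ccontr)
  let ?z = minimizer
  assume "\<not> along ?z < rho"
  hence front: "along ?z = rho" using minimizer(1) by (simp add: region_def)
  define y where "y = ?z + (- rho) *\<^sub>R dir"
  have y_coords: "along y = 0" "across y = across ?z"
    using coords_shift[of ?z "- rho"] front by (simp_all add: y_def)
  have y_in: "y \<in> region"
    using minimizer(1) y_coords weights_pos rho_pos by (simp add: region_def)
  have "?z - x = (?z - x') - (x - x')" by simp
  also have "\<dots> = across ?z" by (simp add: decomp[of ?z] x_minus_x' front)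
  finally have gz: "\<bar>g ?z - g x\<bar> \<le> L * norm (across ?z)"
    using lipschitz_region[OF minimizer(1) x_in_region] by simp
  have "y - x' = across ?z"
    using decomp[of ?z] front by (simp add: y_def algebra_simps)
  hence gy: "\<bar>g y - g x'\<bar> \<le> L * norm (across ?z)"
    using lipschitz_region[OF y_in x'_in_region] by simp
  have "L * norm (across ?z) \<le> L * width"
    using minimizer(1) L_ge_1 by (simp add: region_def)
  also have "L * width = \<epsilon> * rho / 4" using L_ge_1 by (simp add: width_def)
  finally have small: "L * norm (across ?z) \<le> \<epsilon> * rho / 4" .
  have "front_weight * rho\<^sup>2 = \<epsilon> * rho / 4" using rho_pos by (simp add: front_weight_def power2_eq_square)
  moreover have "g x - g x' = slope * rho" using rho_pos by (simp add: slope_def)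
  moreover have "penalised ?z - penalised y = g ?z - g y - (slope - \<epsilon>) * rho - front_weight * rho\<^sup>2"
    by (simp add: penalised_def front y_coords power2_eq_square algebra_simps)
  moreover have "\<epsilon> * rho > 0" using eps_pos rho_pos by simp
  ultimately have "penalised y < penalised ?z"
    using gz gy small by (simp add: algebra_simps)
  with minimizer(2)[OF y_in] show False by simp
qed

text \<open>The region is long enough behind x' that the quadratic front penalty keeps the minimizer
  away from the back face.\<close>
lemma minimizer_off_back: "- back_len < along minimizer"
proof (rule ccontr)
  let ?z = minimizer
  assume "\<not> - back_len < along ?z"
  hence on_back: "along ?z = - back_len" using minimizer(1) by (simp add: region_def)
  define y where "y = ?z + back_len *\<^sub>R dir"
  have y_coords: "along y = 0" "across y = across ?z"
    using coords_shift[of ?z back_len] on_back by (simp_all add: y_def)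
  have y_in: "y \<in> region"
    using minimizer(1) y_coords weights_pos rho_pos by (simp add: region_def)
  have "\<bar>g y - g ?z\<bar> \<le> L * back_len"
    using lipschitz_region[OF y_in minimizer(1)] weights_pos dir_unit by (simp add: y_def)
  moreover have "front_weight * (back_len * back_len) = 2 * (L * back_len) + 2 * (\<epsilon> * back_len)"
    using rho_pos eps_pos by (simp add: front_weight_def back_len_def field_simps)
  moreover have "penalised y - penalised ?z
      = g y - g ?z - (slope - \<epsilon>) * back_len - front_weight * (back_len * back_len) - 2 * (front_weight * (rho * back_len))"
    by (simp add: penalised_def on_back y_coords power2_eq_square algebra_simps)
  moreover have "front_weight * (rho * back_len) > 0" using weights_pos rho_pos by simp
  moreover have "(\<epsilon> - slope) * back_len \<le> (L + \<epsilon>) * back_len"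
    using slope_bound weights_pos by (intro mult_right_mono) auto
  moreover have "\<epsilon> * back_len > 0" using eps_pos weights_pos by simp
  ultimately have "penalised y < penalised ?z" by (simp add: algebra_simps)
  with minimizer(2)[OF y_in] show False by simp
qed

lemma ball_in_region: "\<exists>\<delta>>0. ball minimizer \<delta> \<subseteq> region"
proof -
  let ?z = minimizer
  define \<delta> where "\<delta> = min (min (along ?z + back_len) (rho - along ?z)) (width - norm (across ?z))"
  have "ball ?z \<delta> \<subseteq> region"
  proof
    fix y assume "y \<in> ball ?z \<delta>"
    hence near: "norm (y - ?z) < \<delta>" by (simp add: dist_norm norm_minus_commute)
    have "\<bar>along y - along ?z\<bar> \<le> norm (y - ?z)"
      using Cauchy_Schwarz_ineq2[of dir "y - ?z"] dir_unit by (simp add: along_diff)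
    moreover have "norm (across y) \<le> norm (across ?z) + norm (across y - across ?z)"
      by (metis norm_triangle_sub add.commute)
    moreover have "norm (across y - across ?z) \<le> norm (y - ?z)"
      using norm_orth_comp_le[OF dir_unit] by (simp add: across_diff)
    ultimately show "y \<in> region" using near unfolding region_def \<delta>_def by auto
  qed
  moreover have "\<delta> > 0"
    using minimizer_off_side minimizer_off_front minimizer_off_back by (simp add: \<delta>_def)
  ultimately show ?thesis by blast
qed

text \<open>The negative gradient of the penalty terms at the minimizer.  Since the penalties are
  quadratic, minimality of penalised gives a quadratic minorant of g touching at the
  minimizer, i.e. subgrad is a proximal subgradient of g there.\<close>
definition "subgrad = (slope - \<epsilon> - 2 * front_weight * (along minimizer - rho)) *\<^sub>R dir
    - (2 * side_weight) *\<^sub>R across minimizer"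

lemma proximal_inequality:
  assumes y_in: "y \<in> region"
  shows "g minimizer + subgrad \<bullet> (y - minimizer)
    - (front_weight + side_weight) * (norm (y - minimizer))\<^sup>2 \<le> g y"
proof -
  let ?z = minimizer and ?M = front_weight and ?N = side_weight
  define w where "w = y - ?z"
  define a where "a = dir \<bullet> w"
  define b where "b = orth_comp dir w"
  have along_y: "along y = along ?z + a" using along_diff[of y ?z] by (simp add: a_def w_def)
  have across_y: "across y = across ?z + b"
    unfolding b_def w_def across_diff[symmetric] by simp
  have "across ?z \<bullet> dir = 0"
    using inner_orth_comp[OF dir_unit] by (simp add: across_def inner_commute)
  hence across_b: "across ?z \<bullet> b = across ?z \<bullet> w"
    by (simp add: b_def orth_comp_def inner_diff_right)
  have norm_across_y: "(norm (across y))\<^sup>2 = (norm (across ?z))\<^sup>2 + 2 * (across ?z \<bullet> w) + (norm b)\<^sup>2"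
    using across_b by (simp add: across_y power2_norm_eq_inner inner_add_left inner_add_right inner_commute)
  have subgrad_w: "subgrad \<bullet> w = (slope - \<epsilon> - 2 * ?M * (along ?z - rho)) * a - 2 * ?N * (across ?z \<bullet> w)"
    by (simp add: subgrad_def a_def inner_diff_left)
  have "penalised ?z \<le> penalised y" using minimizer(2)[OF y_in] .
  hence "0 \<le> g y - g ?z - (slope - \<epsilon>) * a + ?M * (2 * (along ?z - rho) * a + a\<^sup>2)
      + ?N * (2 * (across ?z \<bullet> w) + (norm b)\<^sup>2)"
    unfolding penalised_def along_y norm_across_y by (simp add: power2_eq_square algebra_simps)
  hence lower: "g ?z + subgrad \<bullet> w - (?M * a\<^sup>2 + ?N * (norm b)\<^sup>2) \<le> g y"
    by (simp add: subgrad_w algebra_simps)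
  have "a\<^sup>2 \<le> (norm w)\<^sup>2"
    using Cauchy_Schwarz_ineq2[of dir w] dir_unit unfolding a_def
    by (metis abs_norm_cancel power2_abs abs_le_square_iff mult_1)
  moreover have "(norm b)\<^sup>2 \<le> (norm w)\<^sup>2"
    using norm_orth_comp_le[OF dir_unit, of w] by (simp add: b_def power_mono)
  ultimately have "?M * a\<^sup>2 + ?N * (norm b)\<^sup>2 \<le> (?M + ?N) * (norm w)\<^sup>2"
    using weights_pos by (simp add: distrib_right add_mono mult_left_mono)
  with lower show ?thesis by (simp add: w_def)
qed

lemma subgrad_along_dir: "slope - \<epsilon> \<le> subgrad \<bullet> dir"
proof -
  have "across minimizer \<bullet> dir = 0"
    using inner_orth_comp[OF dir_unit] by (simp add: across_def inner_commute)
  hence "subgrad \<bullet> dir = slope - \<epsilon> - 2 * front_weight * (along minimizer - rho)"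
    using dir_unit by (simp add: subgrad_def inner_diff_left norm_eq_1)
  moreover have "front_weight * (along minimizer - rho) \<le> 0"
    using weights_pos minimizer_off_front by (simp add: mult_pos_neg less_imp_le)
  ultimately show ?thesis by simp
qed

lemma subgrad_norm: "norm subgrad \<le> subgrad_bound L \<epsilon>"
proof -
  let ?M = front_weight and ?N = side_weight and ?c = "along minimizer - rho"
  have "norm subgrad \<le> norm ((slope - \<epsilon> - 2 * ?M * ?c) *\<^sub>R dir) + norm ((2 * ?N) *\<^sub>R across minimizer)"
    unfolding subgrad_def by (rule norm_triangle_ineq4)
  also have "\<dots> = \<bar>slope - \<epsilon> - 2 * ?M * ?c\<bar> + 2 * ?N * norm (across minimizer)"
    using dir_unit weights_pos by simp
  also have "\<dots> \<le> (L + \<epsilon> + 2 * ?M * (back_len + rho)) + 2 * ?N * width"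
  proof (rule add_mono)
    have "\<bar>?c\<bar> \<le> back_len + rho" using minimizer_off_front minimizer_off_back by auto
    hence "\<bar>2 * ?M * ?c\<bar> \<le> 2 * ?M * (back_len + rho)"
      using weights_pos by (simp add: abs_mult)
    thus "\<bar>slope - \<epsilon> - 2 * ?M * ?c\<bar> \<le> L + \<epsilon> + 2 * ?M * (back_len + rho)"
      using slope_bound eps_pos by linarith
    show "2 * ?N * norm (across minimizer) \<le> 2 * ?N * width"
      using minimizer_off_side weights_pos by simp
  qed
  also have "\<dots> = L + \<epsilon> + (4 * (L + \<epsilon>) + \<epsilon> / 2) + 2 * (L + 1)"
    using rho_pos eps_pos weights_pos
    by (simp add: front_weight_def back_len_def side_weight_def field_simps)
  also have "\<dots> \<le> subgrad_bound L \<epsilon>" using eps_pos by (simp add: subgrad_bound_def)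
  finally show ?thesis .
qed

end

lemma steep_pair_proximal_subgradient:
  fixes g :: "'a::euclidean_space \<Rightarrow> real"
  assumes "L \<ge> 1" "\<epsilon> > 0" "L-lipschitz_on S g" "x \<noteq> x'"
    and "cball x' (reach_factor L \<epsilon> * dist x x') \<subseteq> S"
  shows "\<exists>z v \<delta> A. dist z x' \<le> reach_factor L \<epsilon> * dist x x' \<and> \<delta> > 0 \<and> ball z \<delta> \<subseteq> S \<and>
    (\<forall>y\<in>ball z \<delta>. g z + v \<bullet> (y - z) - A * (norm (y - z))\<^sup>2 \<le> g y) \<and>
    (g x - g x') / dist x x' - \<epsilon> \<le> norm v \<and> norm v \<le> subgrad_bound L \<epsilon>"
proof -
  interpret steep_pair g S L \<epsilon> x x' using assms by unfold_locales
  obtain \<delta> where \<delta>: "\<delta> > 0" "ball minimizer \<delta> \<subseteq> region" using ball_in_region by blast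
  have "subgrad \<bullet> dir \<le> norm subgrad"
    using norm_cauchy_schwarz[of subgrad dir] dir_unit by simp
  hence "(g x - g x') / dist x x' - \<epsilon> \<le> norm subgrad"
    using subgrad_along_dir by (simp add: slope_def rho_def)
  moreover have "dist minimizer x' \<le> reach_factor L \<epsilon> * dist x x'"
    using minimizer(1) region_subset_cball by (auto simp: dist_commute)
  moreover have "\<forall>y\<in>ball minimizer \<delta>. g minimizer + subgrad \<bullet> (y - minimizer)
      - (front_weight + side_weight) * (norm (y - minimizer))\<^sup>2 \<le> g y"
    using proximal_inequality \<delta>(2) by blast
  ultimately show ?thesis
    using \<delta> region_subset_S subgrad_norm by blast
qed

lemma Limsup_ge_if_frequently:
  fixes f :: "'a \<Rightarrow> 'b::complete_linorder"
  assumes "\<exists>\<^sub>F x in F. c \<le> f x"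
  shows "c \<le> Limsup F f"
proof (rule ccontr)
  assume "\<not> c \<le> Limsup F f"
  hence "\<forall>\<^sub>F x in F. f x < c" by (intro Limsup_lessD) simp
  with assms show False by (simp add: frequently_def eventually_mono not_le)
qed

lemma frequently_gt_if_less_Limsup:
  fixes f :: "'a \<Rightarrow> 'b::complete_linorder"
  assumes "c < Limsup F f"
  shows "\<exists>\<^sub>F x in F. c < f x"
proof (rule ccontr)
  assume "\<not> (\<exists>\<^sub>F x in F. c < f x)"
  hence "\<forall>\<^sub>F x in F. f x \<le> c" by (simp add: not_frequently not_less)
  hence "Limsup F f \<le> c" by (rule Limsup_bounded)
  with assms show False by simp
qed

lemma Limsup_mono_filter:
  fixes f :: "'a \<Rightarrow> 'b::complete_linorder"
  assumes "F \<le> G"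
  shows "Limsup F f \<le> Limsup G f"
  unfolding Limsup_def using assms by (intro INF_superset_mono) (auto simp: le_filter_def)

text \<open>The calmness quotient is the Lipschitz quotient along pairs (x, xb), and these pairs
  approach (xb, xb) off the diagonal.\<close>
lemma calm_le_lip: "calm f xb \<le> lip f xb"
proof -
  let ?G = "\<lambda>p. \<bar>f (fst p) - f (snd p)\<bar> / ereal (norm (fst p - snd p))"
  have "filterlim (\<lambda>x. (x, xb)) (at (xb, xb) within {p. fst p \<noteq> snd p}) (at xb)"
    unfolding filterlim_at by (auto intro!: tendsto_eq_intros simp: eventually_at_filter)
  hence "Limsup (filtermap (\<lambda>x. (x, xb)) (at xb)) ?G \<le> lip f xb"
    unfolding lip_def filterlim_def by (rule Limsup_mono_filter)
  moreover have "calm f xb \<le> Limsup (filtermap (\<lambda>x. (x, xb)) (at xb)) ?G"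
    unfolding calm_def using Limsup_filtermap_ge[where f="\<lambda>x. (x, xb)" and F="at xb" and g="?G"] by simp
  ultimately show ?thesis by simp
qed

lemma calm_nonneg: "0 \<le> calm f xb"
  unfolding calm_def
  by (intro le_Limsup always_eventually allI zero_le_divide_ereal) auto

text \<open>Every regular subgradient bounds the calmness modulus from below: along the ray in
  direction v the function grows at least at rate norm v - e for every e > 0.\<close>
lemma norm_regular_subgrad_le_calm:
  assumes v: "v \<in> regular_subgrad f xb"
  shows "ereal (norm v) \<le> calm f xb"
proof (cases "v = 0")
  case True thus ?thesis using calm_nonneg[of f xb] by (simp add: zero_ereal_def)
next
  case False
  obtain a where fxb: "f xb = ereal a" using v by (auto simp: regular_subgrad_def)
  have "ereal (norm v - e) \<le> calm f xb" if e: "e > 0" for e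
    unfolding calm_def
  proof (rule Limsup_ge_if_frequently, unfold frequently_def, rule notI)
    let ?Q = "\<lambda>x. \<bar>f x - f xb\<bar> / ereal (norm (x - xb))"
    assume "\<forall>\<^sub>F x in at xb. \<not> ereal (norm v - e) \<le> ?Q x"
    moreover have "\<forall>\<^sub>F x in at xb. f xb + ereal (v \<bullet> (x - xb) - e * norm (x - xb)) \<le> f x"
      using v e by (auto simp: regular_subgrad_def)
    ultimately have "\<forall>\<^sub>F x in at xb. \<not> ereal (norm v - e) \<le> ?Q x
        \<and> f xb + ereal (v \<bullet> (x - xb) - e * norm (x - xb)) \<le> f x"
      by (rule eventually_conj)
    then obtain d where d: "d > 0" and near: "\<And>x. x \<noteq> xb \<Longrightarrow> dist x xb < d \<Longrightarrow>
        \<not> ereal (norm v - e) \<le> ?Q x \<and> f xb + ereal (v \<bullet> (x - xb) - e * norm (x - xb)) \<le> f x"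
      unfolding eventually_at by auto
    define s where "s = d / 2"
    define x where "x = xb + (s / norm v) *\<^sub>R v"
    have s: "s > 0" "s < d" using d by (simp_all add: s_def)
    have norm_x: "norm (x - xb) = s" using s \<open>v \<noteq> 0\<close> by (simp add: x_def)
    have "v \<bullet> (x - xb) = s * norm v"
      using \<open>v \<noteq> 0\<close> by (simp add: x_def power2_norm_eq_inner[symmetric] power2_eq_square)
    with near[of x] norm_x s have not_steep: "\<not> ereal (norm v - e) \<le> ?Q x"
      and grow: "ereal (a + s * (norm v - e)) \<le> f x"
      by (auto simp: dist_norm fxb algebra_simps)
    show False
    proof (cases "f x")
      case (real b)
      have "norm v - e \<le> \<bar>b - a\<bar> / s"
        using grow s by (simp add: real pos_le_divide_eq mult.commute)
      thus False using not_steep norm_x s by (simp add: real fxb)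
    next
      case PInf thus False using not_steep norm_x s by (simp add: fxb)
    next
      case MInf thus False using grow by simp
    qed
  qed
  hence "ereal (norm v) \<le> calm f xb + ereal e" if "e > 0" for e
    using that add_right_mono[of "ereal (norm v - e)" "calm f xb" "ereal e"] by simp
  thus ?thesis by (rule ereal_le_epsilon2)
qed

lemma proximal_imp_regular_subgrad:
  fixes f :: "'a::euclidean_space \<Rightarrow> ereal" and g :: "'a \<Rightarrow> real"
  assumes \<delta>: "\<delta> > 0" and fg: "\<forall>y\<in>ball z \<delta>. f y = ereal (g y)"
    and prox: "\<forall>y\<in>ball z \<delta>. g z + v \<bullet> (y - z) - A * (norm (y - z))\<^sup>2 \<le> g y"
  shows "v \<in> regular_subgrad f z"
proof -
  have fz: "f z = ereal (g z)" using fg \<delta> by simp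
  have "\<forall>\<^sub>F y in at z. f z + ereal (v \<bullet> (y - z) - e * norm (y - z)) \<le> f y" if e: "e > 0" for e
    unfolding eventually_at
  proof (intro exI[of _ "min \<delta> (e / (\<bar>A\<bar> + 1))"] conjI ballI impI allI)
    show "0 < min \<delta> (e / (\<bar>A\<bar> + 1))" using \<delta> e by simp
    fix y assume y: "y \<noteq> z \<and> dist y z < min \<delta> (e / (\<bar>A\<bar> + 1))"
    define n where "n = norm (y - z)"
    have n: "n \<ge> 0" "n * (\<bar>A\<bar> + 1) < e" using y by (simp_all add: n_def dist_norm pos_less_divide_eq)
    have y_in: "y \<in> ball z \<delta>" using y by (simp add: dist_commute)
    have "A * n\<^sup>2 \<le> (\<bar>A\<bar> * n) * n"
      using mult_right_mono[OF abs_ge_self[of A], of "n * n"] by (simp add: power2_eq_square mult.assoc)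
    also have "\<dots> \<le> e * n" using n by (intro mult_right_mono) (auto simp: algebra_simps)
    finally have "g z + (v \<bullet> (y - z) - e * n) \<le> g y"
      using prox y_in unfolding n_def by fastforce
    thus "f z + ereal (v \<bullet> (y - z) - e * norm (y - z)) \<le> f y"
      using fg y_in fz by (simp add: n_def)
  qed
  thus ?thesis unfolding regular_subgrad_def using fz by auto
qed

lemma lipschitz_near_realE:
  assumes "lipschitz_near f xb"
  obtains d L where "d > 0" "L \<ge> 1" "\<forall>x\<in>ball xb d. f x = ereal (real_of_ereal (f x))"
    "L-lipschitz_on (ball xb d) (\<lambda>x. real_of_ereal (f x))"
proof -
  obtain d L where d: "d > 0" and finite: "\<forall>x\<in>ball xb d. \<bar>f x\<bar> \<noteq> \<infinity>"
    and lip: "\<forall>x\<in>ball xb d. \<forall>y\<in>ball xb d.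
      \<bar>real_of_ereal (f x) - real_of_ereal (f y)\<bar> \<le> L * dist x y"
    using assms unfolding lipschitz_near_def by blast
  have "(max L 1)-lipschitz_on (ball xb d) (\<lambda>x. real_of_ereal (f x))"
  proof (rule lipschitz_onI)
    fix x y assume "x \<in> ball xb d" "y \<in> ball xb d"
    hence "dist (real_of_ereal (f x)) (real_of_ereal (f y)) \<le> L * dist x y"
      using lip by (simp add: dist_real_def)
    also have "\<dots> \<le> max L 1 * dist x y" by (simp add: mult_right_mono)
    finally show "dist (real_of_ereal (f x)) (real_of_ereal (f y)) \<le> max L 1 * dist x y" .
  qed simp
  moreover have "\<forall>x\<in>ball xb d. f x = ereal (real_of_ereal (f x))"
    using finite by (auto simp: ereal_real')
  ultimately show ?thesis using d by (intro that[of d "max L 1"]) auto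
qed

lemma lipschitz_near_isCont:
  assumes "lipschitz_near f xb"
  shows "isCont f xb"
proof -
  obtain d L where d: "d > 0" and real: "\<forall>x\<in>ball xb d. f x = ereal (real_of_ereal (f x))"
    and lip: "L-lipschitz_on (ball xb d) (\<lambda>x. real_of_ereal (f x))"
    using lipschitz_near_realE[OF assms] .
  have "continuous_on (ball xb d) (\<lambda>x. real_of_ereal (f x))"
    using lip by (rule lipschitz_on_continuous_on)
  hence "isCont (\<lambda>x. real_of_ereal (f x)) xb"
    using d by (simp add: continuous_on_eq_continuous_at)
  hence "isCont (\<lambda>x. ereal (real_of_ereal (f x))) xb"
    unfolding isCont_def by (rule tendsto_ereal)
  moreover have "\<forall>\<^sub>F x in nhds xb. f x = ereal (real_of_ereal (f x))"
    unfolding eventually_nhds_metric using real d by (auto simp: dist_commute intro!: exI[of _ d])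
  ultimately show ?thesis by (simp add: isCont_cong)
qed

lemma steep_pairs_near:
  assumes lip: "ereal c < lip f xb" and fg: "\<forall>x\<in>ball xb d. f x = ereal (g x)"
    and \<eta>: "0 < \<eta>" "\<eta> \<le> d"
  shows "\<exists>x x'. x \<noteq> x' \<and> dist x xb < \<eta> \<and> dist x' xb < \<eta> \<and> c < (g x - g x') / dist x x'"
proof -
  let ?D = "{p. fst p \<noteq> snd p}" and ?Q = "\<lambda>p. \<bar>f (fst p) - f (snd p)\<bar> / ereal (norm (fst p - snd p))"
  have "\<exists>\<^sub>F p in at (xb, xb) within ?D. ereal c < ?Q p"
    using lip unfolding lip_def by (rule frequently_gt_if_less_Limsup)
  moreover have "\<forall>\<^sub>F p in at (xb, xb) within ?D. fst p \<noteq> snd p \<and> dist (fst p) xb < \<eta> \<and> dist (snd p) xb < \<eta>"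
    unfolding eventually_at
  proof (intro exI[of _ \<eta>] conjI[OF \<eta>(1)] ballI impI)
    fix p assume "p \<in> ?D" "p \<noteq> (xb, xb) \<and> dist p (xb, xb) < \<eta>"
    thus "fst p \<noteq> snd p \<and> dist (fst p) xb < \<eta> \<and> dist (snd p) xb < \<eta>"
      using dist_fst_le[of p "(xb, xb)"] dist_snd_le[of p "(xb, xb)"] by auto
  qed
  ultimately have "\<exists>\<^sub>F p in at (xb, xb) within ?D. ereal c < ?Q p
      \<and> fst p \<noteq> snd p \<and> dist (fst p) xb < \<eta> \<and> dist (snd p) xb < \<eta>"
    by (rule frequently_eventually_frequently)
  then obtain a b where ab: "a \<noteq> b" "dist a xb < \<eta>" "dist b xb < \<eta>" "ereal c < ?Q (a, b)"
    by (auto dest!: frequently_ex)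
  have "f a = ereal (g a)" "f b = ereal (g b)" using fg ab \<eta> by (auto simp: dist_commute)
  hence steep: "c < \<bar>g a - g b\<bar> / dist a b" using ab by (simp add: dist_norm)
  show ?thesis
  proof (cases "g b \<le> g a")
    case True thus ?thesis using ab steep by (intro exI[of _ a] exI[of _ b]) auto
  next
    case False thus ?thesis using ab steep by (intro exI[of _ b] exI[of _ a]) (auto simp: dist_commute)
  qed
qed

lemma cball_around_pair:
  assumes "dist x xb < \<eta>" "dist x' xb < \<eta>" "K \<ge> 0"
  shows "cball x' (K * dist x x') \<subseteq> ball xb ((1 + 2 * K) * \<eta>)"
proof
  fix y assume "y \<in> cball x' (K * dist x x')"
  hence "dist xb y \<le> dist xb x' + K * dist x x'" using dist_triangle[of xb y x'] by simp
  moreover have "K * dist x x' \<le> K * (2 * \<eta>)"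
    using assms dist_triangle3[of x x' xb] by (intro mult_left_mono) (simp_all add: dist_commute)
  ultimately show "y \<in> ball xb ((1 + 2 * K) * \<eta>)"
    using assms(2) by (simp add: dist_commute algebra_simps)
qed

lemma steep_regular_subgrads_near:
  assumes "lipschitz_near f xb" "ereal c < lip f xb" "\<epsilon> > 0"
  obtains V where "\<And>\<eta>. \<eta> > 0 \<Longrightarrow>
    \<exists>z v. dist z xb < \<eta> \<and> v \<in> regular_subgrad f z \<and> c - \<epsilon> \<le> norm v \<and> norm v \<le> V"
proof -
  define g where "g x = real_of_ereal (f x)" for x
  obtain d L where d: "d > 0" and L: "L \<ge> 1" and fg: "\<forall>x\<in>ball xb d. f x = ereal (g x)"
    and lip: "L-lipschitz_on (ball xb d) g"
    using lipschitz_near_realE[OF assms(1)] unfolding g_def by metis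
  define K where "K = reach_factor L \<epsilon>"
  have K: "K > 0" using L assms(3) by (simp add: K_def reach_factor_def add_pos_pos)
  have "\<exists>z v. dist z xb < \<eta> \<and> v \<in> regular_subgrad f z \<and> c - \<epsilon> \<le> norm v \<and> norm v \<le> subgrad_bound L \<epsilon>"
    if \<eta>: "\<eta> > 0" for \<eta>
  proof -
    define r where "r = min \<eta> d"
    have r: "r > 0" "r \<le> d" using d \<eta> by (simp_all add: r_def)
    define \<eta>' where "\<eta>' = r / (1 + 2 * K)"
    have "0 \<le> r * K" using K r by simp
    hence "\<eta>' \<le> r" using K by (simp add: \<eta>'_def divide_le_eq algebra_simps)
    hence \<eta>': "\<eta>' > 0" "\<eta>' \<le> d" "(1 + 2 * K) * \<eta>' = r"
      using K r by (simp_all add: \<eta>'_def)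
    obtain x x' where xx: "x \<noteq> x'" "dist x xb < \<eta>'" "dist x' xb < \<eta>'"
      and steep: "c < (g x - g x') / dist x x'"
      using steep_pairs_near[OF assms(2) fg \<eta>'(1,2)] by blast
    have cball: "cball x' (K * dist x x') \<subseteq> ball xb r"
      using cball_around_pair[OF xx(2,3), of K] K \<eta>'(3) by simp
    have ball_r: "ball xb r \<subseteq> ball xb d" using r(2) by (rule subset_ball)
    hence "L-lipschitz_on (ball xb r) g" using lip lipschitz_on_subset by blast
    then obtain z v \<delta> A where z: "dist z x' \<le> K * dist x x'" and \<delta>: "\<delta> > 0" "ball z \<delta> \<subseteq> ball xb r"
      and prox: "\<forall>y\<in>ball z \<delta>. g z + v \<bullet> (y - z) - A * (norm (y - z))\<^sup>2 \<le> g y"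
      and v: "(g x - g x') / dist x x' - \<epsilon> \<le> norm v" "norm v \<le> subgrad_bound L \<epsilon>"
      using steep_pair_proximal_subgradient[OF L assms(3) _ xx(1)] cball unfolding K_def by blast
    have "v \<in> regular_subgrad f z"
      using proximal_imp_regular_subgrad[OF \<delta>(1) _ prox] fg \<delta>(2) ball_r by blast
    moreover have "dist z xb < \<eta>" using z cball by (force simp: r_def dist_commute)
    ultimately show ?thesis using v steep by force
  qed
  thus ?thesis using that by blast
qed

lemma limiting_subgrad_of_sequence:
  assumes zs: "zs \<longlonglongrightarrow> xb" and fz: "(\<lambda>k. f (zs k)) \<longlonglongrightarrow> f xb"
    and vs: "\<And>k. vs k \<in> regular_subgrad f (zs k)"
    and lower: "\<And>k. c \<le> norm (vs k)" and upper: "\<And>k. norm (vs k) \<le> V"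
  shows "\<exists>v\<in>general_subgrad f xb. c \<le> norm v"
proof -
  have "\<forall>k. vs k \<in> cball 0 V" using upper by simp
  then obtain v r where r: "strict_mono r" and lim: "(vs \<circ> r) \<longlonglongrightarrow> v"
    using compact_imp_seq_compact[OF compact_cball] unfolding seq_compact_def by blast
  have "v \<in> general_subgrad f xb"
    unfolding general_subgrad_def mem_Collect_eq
    by (rule exI[of _ "zs \<circ> r"], rule exI[of _ "vs \<circ> r"])
      (use LIMSEQ_subseq_LIMSEQ[OF zs r] LIMSEQ_subseq_LIMSEQ[OF fz r] lim vs in \<open>simp add: o_def\<close>)
  moreover have "c \<le> norm v"
    using tendsto_lowerbound[OF tendsto_norm[OF lim]] lower by (simp add: o_def)
  ultimately show ?thesis by blast
qed

lemma general_subgrad_above_lip: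
  assumes "lipschitz_near f xb" "ereal c < lip f xb"
  shows "\<exists>v\<in>general_subgrad f xb. c \<le> norm v"
proof -
  obtain c1 where c1: "c < c1" "ereal c1 < lip f xb"
    using ereal_dense2[OF assms(2)] by auto
  then obtain V where near: "\<And>\<eta>. \<eta> > 0 \<Longrightarrow>
      \<exists>z v. dist z xb < \<eta> \<and> v \<in> regular_subgrad f z \<and> c1 - (c1 - c) \<le> norm v \<and> norm v \<le> V"
    using steep_regular_subgrads_near[OF assms(1), of c1 "c1 - c"] by auto
  have "\<forall>k. \<exists>z v. dist z xb < inverse (real (Suc k)) \<and> v \<in> regular_subgrad f z \<and> c \<le> norm v \<and> norm v \<le> V"
    using near by simp
  then obtain zs vs where zv: "\<And>k. dist (zs k) xb < inverse (real (Suc k))"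
    "\<And>k. vs k \<in> regular_subgrad f (zs k)" "\<And>k. c \<le> norm (vs k)" "\<And>k. norm (vs k) \<le> V"
    by metis
  have "(\<lambda>k. dist (zs k) xb) \<longlonglongrightarrow> 0"
    by (rule tendsto_sandwich[OF _ _ tendsto_const LIMSEQ_inverse_real_of_nat])
      (use zv(1) in \<open>auto intro!: always_eventually less_imp_le\<close>)
  hence "zs \<longlonglongrightarrow> xb" by (rule tendsto_dist_iff[THEN iffD2])
  moreover have "(\<lambda>k. f (zs k)) \<longlonglongrightarrow> f xb"
    using lipschitz_near_isCont[OF assms(1)] \<open>zs \<longlonglongrightarrow> xb\<close> by (rule isCont_tendsto_compose)
  ultimately show ?thesis using limiting_subgrad_of_sequence zv(2-4) by blast
qed

theorem mainTheorem2:
  fixes f :: "'a::euclidean_space \<Rightarrow> ereal" and xb :: 'a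
  assumes "lipschitz_near f xb"
    and "regular_subgrad f xb = general_subgrad f xb"
  shows "calm f xb = lip f xb"
proof (rule antisym)
  show "calm f xb \<le> lip f xb" by (rule calm_le_lip)
  show "lip f xb \<le> calm f xb"
  proof (rule dense_le)
    fix w assume w: "w < lip f xb"
    show "w \<le> calm f xb"
    proof (cases w)
      case (real c)
      then obtain v where "v \<in> regular_subgrad f xb" "c \<le> norm v"
        using general_subgrad_above_lip[OF assms(1)] w assms(2) by blast
      thus ?thesis using norm_regular_subgrad_le_calm real by (meson ereal_less_eq(3) order.trans)
    qed (use w in auto)
  qed
qed

end
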